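(* Consider a downlink THz-NOMA system in which a base station serves $K=2$ legacy primary users on two fixed (pre-configured) beams $\mathbf{f}_1,\mathbf{f}_2$, both primary users using the same transmit power $\rho^P>0$, and serves $M=1$ secondary user on these beams with total power budget $P^{\max}>0$. Let $h_k>0$ denote the secondary user's effective channel gain on beam $\mathbf{f}_k$, $k\in\{1,2\}$, and let $\rho_k\ge 0$ denote the secondary user's power on beam $\mathbf{f}_k$. Assume that the primary users' target data rates tend to $0$ (so that the primary users' quality-of-service and the secondary user's SIC-decodability constraints become inactive) and that the noise power $\sigma^2\to 0$ (high SNR). In this regime the joint beam and power allocation problem is $$\max_{\rho_1,\rho_2\ge 0,\ \rho_1+\rho_2\le P^{\max}} \; F(\rho_1,\rho_2)=\log_2\!\Big(1+\frac{h_1\rho_1}{h_2\rho_2+h_2\rho^P}\Big)+\log_2\!\Big(1+\frac{h_2\rho_2}{h_1\rho_1+h_1\rho^P}\Big),$$ and the greedy scheduling problem (use a single beam $\mathbf{f}_k$ with all other beams idle) is $\max_{k\in\{1,2\}}\max_{0\le \rho_k\le P^{\max}}\log_2\!\big(1+\frac{h_k\rho_k}{h_{k'}\rho^P}\big)$ with $k'\neq k$, whose solution is $\rho_{k^*}=P^{\max}$ on the beam $k^*=\arg\max_{k}h_k$ and $0$ on the other beam. Then the optimal solution of the joint problem is the same as that of the greedy scheduling problem: $\rho_{k^*}=P^{\max}$, $\rho_{k'}=0$ (with $k^*=\arg\max_k h_k$, $k'\ne k^*$) maximizes $F$ over the feasible set.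
   Context: Effective gains: $h_k=\frac{|a^S|^2}{\mathrm{PL}^S}|\mathbf{a}^H(\theta^S)\mathbf{f}_k|^2$, where $a^S$ is the secondary user's fading coefficient, $\mathrm{PL}^S$ its path loss, $\theta^S$ its angle of departure, and $\mathbf{a}(\theta)=[1,e^{-j2\pi f_c d\sin\theta/c},\dots,e^{-j2(N-1)\pi f_c d\sin\theta/c}]^T$ the array steering vector. The secondary user's signal on beam $k$ suffers interference from the primary signal and the secondary signal on the other beam $k'$ (inter-beam interference $h_{k'}(\rho^P+\rho_{k'})$); primary users treat secondary signals as noise and the secondary user decodes the primary signal on its beam first via successive interference cancellation. Logarithms are base 2. *)

theory Defs
  imports Complex_Main
begin

definition jointF :: "real \<Rightarrow> real \<Rightarrow> real \<Rightarrow> real \<Rightarrow> real \<Rightarrow> real" where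
  "jointF h1 h2 rhoP rho1 rho2 =
     log 2 (1 + h1 * rho1 / (h2 * rho2 + h2 * rhoP)) +
     log 2 (1 + h2 * rho2 / (h1 * rho1 + h1 * rhoP))"

definition feasible :: "real \<Rightarrow> real \<Rightarrow> real \<Rightarrow> bool" where
  "feasible Pmax rho1 rho2 \<longleftrightarrow> 0 \<le> rho1 \<and> 0 \<le> rho2 \<and> rho1 + rho2 \<le> Pmax"

definition greedy_sol :: "real \<Rightarrow> real \<Rightarrow> real \<Rightarrow> real \<times> real" where
  "greedy_sol h1 h2 Pmax = (if h1 \<ge> h2 then (Pmax, 0) else (0, Pmax))"

end

theory Submission
  imports Defs
begin

text \<open>Write the received signal powers as \<open>x = h1 \<rho>1\<close>, \<open>y = h2 \<rho>2\<close> and the primary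
interference levels as \<open>a = h1 \<rho>\<^sup>P\<close>, \<open>b = h2 \<rho>\<^sup>P\<close>, where \<open>b \<le> a\<close> when beam 1 is the
stronger one. The rate on the stronger beam only grows if its interference \<open>x + a\<close> is
replaced by the smaller \<open>b\<close>, and then the two rates telescope:
\<open>(1 + x/(y + b)) (1 + y/b) = 1 + (x + y)/b\<close>. Hence the sum rate is at most the single-beam
rate \<open>log (1 + (x + y)/b)\<close>, which is largest when the whole power budget goes to the
stronger beam.\<close>

lemma log_one_plus_chain:
  fixes B x y b :: real
  assumes "0 \<le> x" "0 \<le> y" "0 < b"
  shows "log B (1 + x / (y + b)) + log B (1 + y / b) = log B (1 + (x + y) / b)"
proof -
  have "0 < y + b"
    using assms by linarith
  then have "(1 + x / (y + b)) * (1 + y / b) = (x + y + b) / (y + b) * ((y + b) / b)"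
    using assms by (simp add: field_simps)
  also have "\<dots> = (x + y + b) / b"
    using \<open>0 < y + b\<close> by simp
  also have "\<dots> = 1 + (x + y) / b"
    using assms by (simp add: field_simps)
  finally have product: "(1 + x / (y + b)) * (1 + y / b) = 1 + (x + y) / b" .
  have "0 < 1 + x / (y + b)" "0 < 1 + y / b"
    using assms by (simp_all add: add_pos_nonneg)
  then show ?thesis
    by (metis product log_mult_pos)
qed

lemma log_sum_rate_le_single_rate:
  fixes B x y a b :: real
  assumes "1 < B" "0 \<le> x" "0 \<le> y" "0 < b" "b \<le> a"
  shows "log B (1 + x / (y + b)) + log B (1 + y / (x + a)) \<le> log B (1 + (x + y) / b)"
proof -
  have "y / (x + a) \<le> y / b"
    using assms by (intro divide_left_mono) auto
  then have "log B (1 + y / (x + a)) \<le> log B (1 + y / b)"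
    using assms by (subst log_le_cancel_iff) (auto intro: add_pos_nonneg)
  then show ?thesis
    using log_one_plus_chain[of x y b B] assms by linarith
qed

lemma jointF_swap: "jointF h1 h2 r p1 p2 = jointF h2 h1 r p2 p1"
  unfolding jointF_def by simp

lemma jointF_le_stronger_beam:
  fixes h1 h2 r P p1 p2 :: real
  assumes "0 < h2" "h2 \<le> h1" "0 < r" and feas: "feasible P p1 p2"
  shows "jointF h1 h2 r p1 p2 \<le> jointF h1 h2 r P 0"
proof -
  from feas have p: "0 \<le> p1" "0 \<le> p2" "p1 + p2 \<le> P"
    unfolding feasible_def by auto
  have "h1 * p1 + h2 * p2 \<le> h1 * P"
  proof -
    have "h2 * p2 \<le> h1 * p2"
      using assms p by (simp add: mult_right_mono)
    also have "h1 * p1 + h1 * p2 \<le> h1 * P"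
      using assms p by (simp flip: distrib_left)
    finally show ?thesis by simp
  qed
  then have "(h1 * p1 + h2 * p2) / (h2 * r) \<le> h1 * P / (h2 * r)"
    using assms by (simp add: divide_right_mono)
  then have "log 2 (1 + (h1 * p1 + h2 * p2) / (h2 * r)) \<le> log 2 (1 + h1 * P / (h2 * r))"
    using assms p by (subst log_le_cancel_iff) (auto intro: add_pos_nonneg)
  moreover have "jointF h1 h2 r p1 p2 \<le> log 2 (1 + (h1 * p1 + h2 * p2) / (h2 * r))"
    unfolding jointF_def using assms p
    by (intro log_sum_rate_le_single_rate) (auto intro: mult_right_mono)
  ultimately show ?thesis
    by (simp add: jointF_def)
qed

theorem lemma1:
  fixes h1 h2 rhoP Pmax :: real
  assumes "h1 > 0" and "h2 > 0" and "rhoP > 0" and "Pmax > 0"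
  shows "feasible Pmax (fst (greedy_sol h1 h2 Pmax)) (snd (greedy_sol h1 h2 Pmax)) \<and>
         (\<forall>rho1 rho2. feasible Pmax rho1 rho2 \<longrightarrow>
            jointF h1 h2 rhoP rho1 rho2 \<le>
            jointF h1 h2 rhoP (fst (greedy_sol h1 h2 Pmax)) (snd (greedy_sol h1 h2 Pmax)))"
proof (cases "h2 \<le> h1")
  case True
  then show ?thesis
    using assms jointF_le_stronger_beam[of h2 h1 rhoP Pmax]
    by (auto simp: greedy_sol_def feasible_def)
next
  case False
  have "jointF h1 h2 rhoP rho1 rho2 \<le> jointF h1 h2 rhoP 0 Pmax"
    if "feasible Pmax rho1 rho2" for rho1 rho2
    using that False assms jointF_le_stronger_beam[of h1 h2 rhoP Pmax rho2 rho1]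
    by (simp add: jointF_swap feasible_def add.commute)
  then show ?thesis
    using False assms by (simp add: greedy_sol_def feasible_def)
qed

end
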